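(* Let $G$ be a finite totally rectangular digraph that contains a cycle of net length $d>0$. Then $G$ contains a directed cycle of length $d$.
   Context: In a digraph $G$, a path is a sequence of vertices $(u_1,\dots,u_k)$ together with edges $(e_1,\dots,e_{k-1})$ where each $e_i$ is either $(u_i,u_{i+1})\in E(G)$ (a forward edge) or $(u_{i+1},u_i)\in E(G)$ (a backward edge); vertices need not be distinct. Its length is $k-1$, its net length is the number of forward edges minus the number of backward edges, and it is directed if all edges are forward. A cycle is a sequence $(u_0,\dots,u_{k-1})$ with edges $(e_0,\dots,e_{k-1})$ such that $(u_0,\dots,u_{k-1},u_0)$ with these edges is a path; its length is $k$, its net length is the net length of this path, and it is directed if this path is directed. A digraph $G$ is $k$-rectangular if whenever $G$ contains directed paths of length $k$ from $x$ to $y$, from $x'$ to $y$, and from $x'$ to $y'$, then $G$ contains a directed path of length $k$ from $x$ to $y'$. $G$ is totally rectangular if it is $k$-rectangular for all $k\ge 1$. *)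

theory Defs
  imports Main
begin

text \<open>A path is a nonempty list of vertices vs = [u_1,...,u_k] together with a list
ds of k-1 edge orientations: ds!i = True means the i-th edge is the forward
edge (u_i,u_{i+1}) \<in> E, False means it is the backward edge (u_{i+1},u_i) \<in> E.\<close>

definition is_path :: "'a set \<Rightarrow> ('a \<times> 'a) set \<Rightarrow> 'a list \<Rightarrow> bool list \<Rightarrow> bool" where
  "is_path V E vs ds \<longleftrightarrow> vs \<noteq> [] \<and> set vs \<subseteq> V \<and> length ds = length vs - 1 \<and>
     (\<forall>i < length ds. (if ds ! i then (vs ! i, vs ! Suc i) \<in> E else (vs ! Suc i, vs ! i) \<in> E))"

definition net_length :: "bool list \<Rightarrow> int" where
  "net_length ds = int (length (filter (\<lambda>b. b) ds)) - int (length (filter (\<lambda>b. \<not> b) ds))"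

definition directed :: "bool list \<Rightarrow> bool" where
  "directed ds \<longleftrightarrow> (\<forall>b \<in> set ds. b)"

definition is_cycle :: "'a set \<Rightarrow> ('a \<times> 'a) set \<Rightarrow> 'a list \<Rightarrow> bool list \<Rightarrow> bool" where
  "is_cycle V E vs ds \<longleftrightarrow> vs \<noteq> [] \<and> is_path V E (vs @ [hd vs]) ds"

definition has_dpath :: "'a set \<Rightarrow> ('a \<times> 'a) set \<Rightarrow> nat \<Rightarrow> 'a \<Rightarrow> 'a \<Rightarrow> bool" where
  "has_dpath V E k x y \<longleftrightarrow> (\<exists>vs ds. is_path V E vs ds \<and> directed ds \<and> length ds = k \<and>
      hd vs = x \<and> last vs = y)"

definition rectangular :: "'a set \<Rightarrow> ('a \<times> 'a) set \<Rightarrow> nat \<Rightarrow> bool" where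
  "rectangular V E k \<longleftrightarrow> (\<forall>x y x' y'. has_dpath V E k x y \<and> has_dpath V E k x' y \<and>
      has_dpath V E k x' y' \<longrightarrow> has_dpath V E k x y')"

definition totally_rectangular :: "'a set \<Rightarrow> ('a \<times> 'a) set \<Rightarrow> bool" where
  "totally_rectangular V E \<longleftrightarrow> (\<forall>k \<ge> 1. rectangular V E k)"

end

theory Submission
  imports Defs
begin

(* Unroll the cycle of net length d into a walk w indexed by the naturals, periodic with the
   length p of the cycle, and let height t be the net length of its first t steps, so that
   height (t + p) = height t + d.  Call the segment between positions i and j a climb if all
   heights on it lie between height i and height j.  In a totally rectangular digraph every
   climb can be replaced by a directed path of length height j - height i from w i to w j,
   by induction on the length of the segment: if an interior position revisits height i or
   height j, rectangularity exchanges an endpoint of the path obtained from a shorter climb;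
   otherwise the first and the last step are forward edges around a shorter climb.
   Now take a position a of globally minimal height and a position j of maximal height in
   [a + p, a + 2p]: both [a, j] and [a + p, j] are climbs, which gives directed paths from w a
   to w j of lengths q + d and q.  Rectangularity shortens such a pair of paths to a closed
   directed walk of length d, that is, a directed cycle. *)

lemma has_dpath_iff_relpow:
  assumes "E \<subseteq> V \<times> V"
  shows "has_dpath V E n x y \<longleftrightarrow> x \<in> V \<and> (x, y) \<in> E ^^ n"
proof
  assume "has_dpath V E n x y"
  then obtain vs ds where p: "is_path V E vs ds" "directed ds" "length ds = n"
      "hd vs = x" "last vs = y"
    unfolding has_dpath_def by blast
  have "vs \<noteq> []" and len: "length vs = Suc n"
    using p(1,3) by (auto simp: is_path_def)
  have "(vs ! i, vs ! Suc i) \<in> E" if "i < n" for i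
  proof -
    have "ds ! i"
      using p(2,3) that unfolding directed_def by (metis nth_mem)
    moreover have "if ds ! i then (vs ! i, vs ! Suc i) \<in> E else (vs ! Suc i, vs ! i) \<in> E"
      using p(1,3) that unfolding is_path_def by blast
    ultimately show ?thesis
      by simp
  qed
  moreover have "vs ! 0 = x" "vs ! n = y"
    using p len \<open>vs \<noteq> []\<close> by (auto simp: hd_conv_nth last_conv_nth)
  moreover have "x \<in> V"
    using p \<open>vs \<noteq> []\<close> by (auto simp: is_path_def)
  ultimately show "x \<in> V \<and> (x, y) \<in> E ^^ n"
    unfolding relpow_fun_conv by (intro conjI exI[of _ "nth vs"]) auto
next
  assume "x \<in> V \<and> (x, y) \<in> E ^^ n"
  then obtain g where "x \<in> V" "g 0 = x" "g n = y" and g: "\<And>i. i < n \<Longrightarrow> (g i, g (Suc i)) \<in> E"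
    unfolding relpow_fun_conv by blast
  have "g i \<in> V" if "i \<le> n" for i
  proof (cases i)
    case (Suc k)
    then show ?thesis
      using g[of k] that assms by auto
  qed (use \<open>x \<in> V\<close> \<open>g 0 = x\<close> in simp)
  then have "is_path V E (map g [0..<Suc n]) (replicate n True)"
    using g by (auto simp: is_path_def nth_append simp del: upt_Suc)
  then show "has_dpath V E n x y"
    unfolding has_dpath_def directed_def
    using \<open>g 0 = x\<close> \<open>g n = y\<close>
    by (intro exI[of _ "map g [0..<Suc n]"] exI[of _ "replicate n True"])
      (simp add: hd_map last_map del: upt_Suc)
qed

lemma has_dpath_0: "E \<subseteq> V \<times> V \<Longrightarrow> has_dpath V E 0 x y \<longleftrightarrow> x \<in> V \<and> y = x"
  by (auto simp: has_dpath_iff_relpow)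

lemma has_dpath_edge: "E \<subseteq> V \<times> V \<Longrightarrow> has_dpath V E 1 x y \<longleftrightarrow> (x, y) \<in> E"
  by (auto simp: has_dpath_iff_relpow)

lemma relpow_closed:
  assumes "E \<subseteq> V \<times> V" "x \<in> V" "(x, y) \<in> E ^^ n"
  shows "y \<in> V"
  using assms by (cases n) (auto dest: relpow_Suc_D2)

lemma has_dpath_add:
  assumes "E \<subseteq> V \<times> V"
  shows "has_dpath V E (m + n) x z \<longleftrightarrow> (\<exists>y. has_dpath V E m x y \<and> has_dpath V E n y z)"
  using relpow_closed[OF assms] by (auto simp: has_dpath_iff_relpow[OF assms] relpow_add)

lemma totally_rectangular_imp_rectangular:
  assumes "E \<subseteq> V \<times> V" "totally_rectangular V E"
  shows "rectangular V E k"
proof (cases "k = 0")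
  case True
  then show ?thesis
    by (auto simp: rectangular_def has_dpath_0[OF assms(1)])
qed (use assms(2) in \<open>auto simp: totally_rectangular_def\<close>)

lemma rectangular_transfer_target:
  assumes "E \<subseteq> V \<times> V" "rectangular V E k"
    and "has_dpath V E (l + k) x y" "has_dpath V E k x' y" "has_dpath V E k x' y'"
  shows "has_dpath V E (l + k) x y'"
proof -
  obtain s where "has_dpath V E l x s" "has_dpath V E k s y"
    using assms(3) has_dpath_add[OF assms(1)] by blast
  moreover have "has_dpath V E k s y'"
    using assms(2,4,5) \<open>has_dpath V E k s y\<close> unfolding rectangular_def by blast
  ultimately show ?thesis
    using has_dpath_add[OF assms(1)] by blast
qed

lemma rectangular_transfer_source:
  assumes "E \<subseteq> V \<times> V" "rectangular V E k"
    and "has_dpath V E (k + l) x y" "has_dpath V E k x z" "has_dpath V E k x' z"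
  shows "has_dpath V E (k + l) x' y"
proof -
  obtain s where "has_dpath V E k x s" "has_dpath V E l s y"
    using assms(3) has_dpath_add[OF assms(1)] by blast
  moreover have "has_dpath V E k x' s"
    using assms(2,4,5) \<open>has_dpath V E k x s\<close> unfolding rectangular_def by blast
  ultimately show ?thesis
    using has_dpath_add[OF assms(1)] by blast
qed

lemma closed_dpath_of_length_gap:
  assumes E: "E \<subseteq> V \<times> V" and TR: "totally_rectangular V E" and "d > 0"
    and "has_dpath V E q x y" "has_dpath V E (q + d) x y"
  shows "\<exists>z. has_dpath V E d z z"
  using assms(4,5)
proof (induction q arbitrary: x y rule: less_induct)
  case (less q x y)
  obtain u where xu: "has_dpath V E d x u" and uy: "has_dpath V E q u y"
    using less.prems(2) has_dpath_add[OF E] by (metis add.commute)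
  have rect: "rectangular V E q"
    using E TR by (rule totally_rectangular_imp_rectangular)
  show ?case
  proof (cases "q \<le> d")
    case True
    then obtain p where xp: "has_dpath V E q x p" and pu: "has_dpath V E (d - q) p u"
      using xu has_dpath_add[OF E, of q "d - q"] by auto
    have "has_dpath V E q u p"
      using rect uy less.prems(1) xp unfolding rectangular_def by blast
    then have "has_dpath V E (q + (d - q)) u u"
      using pu has_dpath_add[OF E] by blast
    then show ?thesis
      using True by auto
  next
    case False
    then obtain p where up: "has_dpath V E (q - d) u p" and py: "has_dpath V E d p y"
      using uy has_dpath_add[OF E, of "q - d" d] by auto
    have "has_dpath V E (d + (q - d)) x p"
      using xu up has_dpath_add[OF E] by blast
    then have "has_dpath V E q x p"
      using False by simp
    then have "has_dpath V E q u p"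
      using rect uy less.prems(1) unfolding rectangular_def by blast
    then have "has_dpath V E (q - d + d) u p"
      using False by simp
    moreover have "q - d < q"
      using False \<open>d > 0\<close> by simp
    ultimately show ?thesis
      using less.IH up by blast
  qed
qed

lemma directed_cycle_of_closed_dpath:
  assumes "has_dpath V E n z z" "n > 0"
  shows "\<exists>vs ds. is_cycle V E vs ds \<and> directed ds \<and> length vs = n"
proof -
  obtain ws ds where p: "is_path V E ws ds" "directed ds" "length ds = n" "hd ws = z" "last ws = z"
    using assms(1) unfolding has_dpath_def by blast
  then have "length ws = Suc n"
    by (auto simp: is_path_def)
  then have "butlast ws @ [hd (butlast ws)] = ws" "butlast ws \<noteq> []"
    using p(4,5) assms(2) by (cases ws; auto)+
  then have "is_cycle V E (butlast ws) ds"
    unfolding is_cycle_def using p(1) by simp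
  then show ?thesis
    using p(2) \<open>length ws = Suc n\<close>
    by (intro exI[of _ "butlast ws"] exI[of _ ds]) simp
qed

lemma ex_min_on_interval:
  fixes g :: "nat \<Rightarrow> 'b::linorder"
  assumes "a \<le> b"
  obtains m where "a \<le> m" "m \<le> b" "\<And>t. a \<le> t \<Longrightarrow> t \<le> b \<Longrightarrow> g m \<le> g t"
proof -
  obtain m where m: "m \<in> {a..b}" "Min (g ` {a..b}) = g m"
    using obtains_MIN[of "{a..b}" g] assms by auto
  have "g m \<le> g t" if "a \<le> t" "t \<le> b" for t
    using Min_le[of "g ` {a..b}" "g t"] m(2) that by simp
  with m(1) show ?thesis
    by (intro that) auto
qed

lemma ex_max_on_interval:
  fixes g :: "nat \<Rightarrow> 'b::linorder"
  assumes "a \<le> b"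
  obtains m where "a \<le> m" "m \<le> b" "\<And>t. a \<le> t \<Longrightarrow> t \<le> b \<Longrightarrow> g t \<le> g m"
proof -
  obtain m where m: "m \<in> {a..b}" "Max (g ` {a..b}) = g m"
    using obtains_MAX[of "{a..b}" g] assms by auto
  have "g t \<le> g m" if "a \<le> t" "t \<le> b" for t
    using Max_ge[of "g ` {a..b}" "g t"] m(2) that by simp
  with m(1) show ?thesis
    by (intro that) auto
qed

locale oriented_walk =
  fixes V :: "'a set" and E :: "('a \<times> 'a) set" and w :: "nat \<Rightarrow> 'a" and f :: "nat \<Rightarrow> bool"
  assumes edges_in_V: "E \<subseteq> V \<times> V"
    and walk_step: "(if f t then (w t, w (Suc t)) else (w (Suc t), w t)) \<in> E"
begin

definition height :: "nat \<Rightarrow> int" where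
  "height t = (\<Sum>s<t. if f s then 1 else -1)"

lemma height_0 [simp]: "height 0 = 0"
  by (simp add: height_def)

lemma height_Suc: "height (Suc t) = height t + (if f t then 1 else -1)"
  by (simp add: height_def)

lemma walk_in_V: "w t \<in> V"
  using walk_step[of t] edges_in_V by (auto split: if_splits)

lemma height_adjacent:
  assumes "s' = Suc s \<or> s = Suc s'"
  shows "\<bar>height s' - height s\<bar> = 1"
  using assms by (auto simp: height_Suc)

lemma ascending_step_edge:
  assumes "s' = Suc s \<or> s = Suc s'" "height s' = height s + 1"
  shows "(w s, w s') \<in> E"
  using assms walk_step[of s] walk_step[of s'] by (auto simp: height_Suc split: if_splits)

(* Position i may lie after j: climbs run in either direction along the walk, which the
   induction below needs when a climb is split at an interior extremum. *)
definition climbs :: "nat \<Rightarrow> nat \<Rightarrow> bool" where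
  "climbs i j \<longleftrightarrow>
    (\<forall>t. min i j \<le> t \<and> t \<le> max i j \<longrightarrow> height i \<le> height t \<and> height t \<le> height j)"

lemma climbsI:
  "(\<And>t. min i j \<le> t \<Longrightarrow> t \<le> max i j \<Longrightarrow> height i \<le> height t \<and> height t \<le> height j)
    \<Longrightarrow> climbs i j"
  by (simp add: climbs_def)

lemma climbsD:
  "climbs i j \<Longrightarrow> min i j \<le> t \<Longrightarrow> t \<le> max i j \<Longrightarrow> height i \<le> height t \<and> height t \<le> height j"
  by (simp add: climbs_def)

lemma dpath_of_climb_revisiting_top:
  assumes TR: "totally_rectangular V E"
    and IH: "\<And>a b. max a b - min a b < max i j - min i j \<Longrightarrow> climbs a b \<Longrightarrow>
      has_dpath V E (nat (height b - height a)) (w a) (w b)"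
    and ij: "climbs i j" and t: "min i j < t" "t < max i j" "height t = height j"
  shows "has_dpath V E (nat (height j - height i)) (w i) (w j)"
proof -
  note bounds = climbsD[OF ij]
  have "climbs i t"
    by (rule climbsI) (use bounds t in auto)
  then have it: "has_dpath V E (nat (height j - height i)) (w i) (w t)"
    using IH[of i t] t by auto
  have "min t j \<le> max t j"
    by linarith
  then obtain m where m: "min t j \<le> m" "m \<le> max t j"
    and m_min: "\<And>s. min t j \<le> s \<Longrightarrow> s \<le> max t j \<Longrightarrow> height m \<le> height s"
    using ex_min_on_interval[where g = height] by blast
  have "climbs m j"
  proof (rule climbsI)
    fix s assume "min m j \<le> s" "s \<le> max m j"
    then show "height m \<le> height s \<and> height s \<le> height j"
      using m_min[of s] bounds[of s] m t by auto
  qed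
  moreover have "climbs m t"
  proof (rule climbsI)
    fix s assume "min m t \<le> s" "s \<le> max m t"
    then show "height m \<le> height s \<and> height s \<le> height t"
      using m_min[of s] bounds[of s] m t by auto
  qed
  moreover have "max m j - min m j < max i j - min i j" "max m t - min m t < max i j - min i j"
    using m t by linarith+
  ultimately have mj: "has_dpath V E (nat (height j - height m)) (w m) (w j)"
    and mt: "has_dpath V E (nat (height j - height m)) (w m) (w t)"
    using IH[of m j] IH[of m t] t(3) by auto
  have "min i j \<le> m" "m \<le> max i j"
    using m t by linarith+
  then have "height i \<le> height m"
    using bounds by blast
  then have "nat (height j - height i) = (nat (height j - height i) - nat (height j - height m))
      + nat (height j - height m)"
    by (intro le_add_diff_inverse2[symmetric] nat_mono) linarith
  then show ?thesis
    using rectangular_transfer_target[OF edges_in_V totally_rectangular_imp_rectangular[OF edges_in_V TR]]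
      it mt mj by metis
qed

lemma dpath_of_climb_revisiting_bottom:
  assumes TR: "totally_rectangular V E"
    and IH: "\<And>a b. max a b - min a b < max i j - min i j \<Longrightarrow> climbs a b \<Longrightarrow>
      has_dpath V E (nat (height b - height a)) (w a) (w b)"
    and ij: "climbs i j" and t: "min i j < t" "t < max i j" "height t = height i"
  shows "has_dpath V E (nat (height j - height i)) (w i) (w j)"
proof -
  note bounds = climbsD[OF ij]
  have "climbs t j"
    by (rule climbsI) (use bounds t in auto)
  then have tj: "has_dpath V E (nat (height j - height i)) (w t) (w j)"
    using IH[of t j] t by auto
  have "min i t \<le> max i t"
    by linarith
  then obtain m where m: "min i t \<le> m" "m \<le> max i t"
    and m_max: "\<And>s. min i t \<le> s \<Longrightarrow> s \<le> max i t \<Longrightarrow> height s \<le> height m"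
    using ex_max_on_interval[where g = height] by blast
  have "climbs i m"
  proof (rule climbsI)
    fix s assume "min i m \<le> s" "s \<le> max i m"
    then show "height i \<le> height s \<and> height s \<le> height m"
      using m_max[of s] bounds[of s] m t by auto
  qed
  moreover have "climbs t m"
  proof (rule climbsI)
    fix s assume "min t m \<le> s" "s \<le> max t m"
    then show "height t \<le> height s \<and> height s \<le> height m"
      using m_max[of s] bounds[of s] m t by auto
  qed
  moreover have "max i m - min i m < max i j - min i j" "max t m - min t m < max i j - min i j"
    using m t by linarith+
  ultimately have im: "has_dpath V E (nat (height m - height i)) (w i) (w m)"
    and tm: "has_dpath V E (nat (height m - height i)) (w t) (w m)"
    using IH[of i m] IH[of t m] t(3) by auto
  have "min i j \<le> m" "m \<le> max i j"
    using m t by linarith+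
  then have "height m \<le> height j"
    using bounds by blast
  then have "nat (height j - height i) = nat (height m - height i)
      + (nat (height j - height i) - nat (height m - height i))"
    by (intro le_add_diff_inverse[symmetric] nat_mono) linarith
  then show ?thesis
    using rectangular_transfer_source[OF edges_in_V totally_rectangular_imp_rectangular[OF edges_in_V TR]]
      tj tm im by metis
qed

lemma dpath_of_strict_climb:
  assumes IH: "\<And>a b. max a b - min a b < max i j - min i j \<Longrightarrow> climbs a b \<Longrightarrow>
      has_dpath V E (nat (height b - height a)) (w a) (w b)"
    and "climbs i j" "i \<noteq> j"
    and strict: "\<And>t. min i j < t \<Longrightarrow> t < max i j \<Longrightarrow> height i < height t \<and> height t < height j"
  shows "has_dpath V E (nat (height j - height i)) (w i) (w j)"
proof -
  note E = edges_in_V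
  consider (adjacent) "j = Suc i \<or> i = Suc j"
    | (distant) i' j' where "i' = Suc i \<or> i = Suc i'" "j = Suc j' \<or> j' = Suc j"
        "min i j < min i' j'" "max i' j' < max i j"
  proof (cases "j = Suc i \<or> i = Suc j")
    case False
    show ?thesis
    proof (cases "i < j")
      case True
      with False show ?thesis
        by (intro that(2)[of "Suc i" "j - 1"]) auto
    next
      case False
      with \<open>\<not> (j = Suc i \<or> i = Suc j)\<close> \<open>i \<noteq> j\<close> show ?thesis
        by (intro that(2)[of "i - 1" "Suc j"]) auto
    qed
  qed (rule that(1))
  then show ?thesis
  proof cases
    case adjacent
    then have "height j = height i + 1"
      using height_adjacent[of j i] climbsD[OF \<open>climbs i j\<close>, of j] by auto
    then show ?thesis
      using ascending_step_edge[OF adjacent] has_dpath_edge[OF E] by simp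
  next
    case distant
    have inside: "min i j < s" "s < max i j" if "min i' j' \<le> s" "s \<le> max i' j'" for s
      using that distant(3,4) by linarith+
    have up_i: "height i' = height i + 1"
      using height_adjacent[OF distant(1)] strict[OF inside[of i']] by linarith
    have up_j: "height j = height j' + 1"
      using height_adjacent[OF distant(2)] strict[OF inside[of j']] by linarith
    have "climbs i' j'"
    proof (rule climbsI)
      fix s assume "min i' j' \<le> s" "s \<le> max i' j'"
      then have "height i < height s \<and> height s < height j"
        using inside strict by blast
      then show "height i' \<le> height s \<and> height s \<le> height j'"
        using up_i up_j by linarith
    qed
    moreover have "max i' j' - min i' j' < max i j - min i j"
      using distant(3,4) by linarith
    ultimately have "has_dpath V E (nat (height j' - height i')) (w i') (w j')"
      using IH by blast
    moreover have "has_dpath V E 1 (w j') (w j)"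
      using ascending_step_edge[OF distant(2) up_j] has_dpath_edge[OF E] by blast
    ultimately have "has_dpath V E (nat (height j' - height i') + 1) (w i') (w j)"
      using has_dpath_add[OF E] by blast
    moreover have "has_dpath V E 1 (w i) (w i')"
      using ascending_step_edge[OF distant(1) up_i] has_dpath_edge[OF E] by blast
    ultimately have "has_dpath V E (1 + (nat (height j' - height i') + 1)) (w i) (w j)"
      using has_dpath_add[OF E] by blast
    moreover have "nat (height j - height i) = 1 + (nat (height j' - height i') + 1)"
      using up_i up_j climbsD[OF \<open>climbs i' j'\<close>, of i'] by simp
    ultimately show ?thesis
      by simp
  qed
qed

lemma dpath_of_climb:
  assumes "totally_rectangular V E" "climbs i j"
  shows "has_dpath V E (nat (height j - height i)) (w i) (w j)"
  using assms(2)
proof (induction "max i j - min i j" arbitrary: i j rule: less_induct)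
  case less
  have "height i \<le> height t \<and> height t \<le> height j" if "min i j < t" "t < max i j" for t
    using climbsD[OF less.prems] that by simp
  then consider (refl) "i = j"
    | (top) t where "min i j < t" "t < max i j" "height t = height j"
    | (bottom) t where "min i j < t" "t < max i j" "height t = height i"
    | (strict) "i \<noteq> j" "\<And>t. min i j < t \<Longrightarrow> t < max i j \<Longrightarrow> height i < height t \<and> height t < height j"
    by (metis order.not_eq_order_implies_strict)
  then show ?case
  proof cases
    case refl
    then show ?thesis
      using walk_in_V has_dpath_0[OF edges_in_V] by simp
  next
    case top
    then show ?thesis
      using dpath_of_climb_revisiting_top[OF assms(1) less.hyps less.prems] by blast
  next
    case bottom
    then show ?thesis
      using dpath_of_climb_revisiting_bottom[OF assms(1) less.hyps less.prems] by blast
  next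
    case strict
    then show ?thesis
      using dpath_of_strict_climb[OF less.hyps less.prems] by blast
  qed
qed

end

locale periodic_walk = oriented_walk +
  fixes p :: nat
  assumes period_pos: "p > 0"
    and walk_periodic: "w (t + p) = w t"
    and orientation_periodic: "f (t + p) = f t"
begin

lemma height_add_period: "height (t + p) = height t + height p"
  by (induction t) (simp_all add: height_Suc orientation_periodic)

lemma ex_global_min_height:
  assumes "height p > 0"
  obtains a where "\<And>t. height a \<le> height t"
proof -
  obtain a where a: "\<And>t. t \<le> p - 1 \<Longrightarrow> height a \<le> height t"
    using ex_min_on_interval[of 0 "p - 1" height] by auto
  have "height a \<le> height t" for t
  proof (induction t rule: less_induct)
    case (less t)
    show ?case
    proof (cases "t < p")
      case False
      then have "height t = height (t - p) + height p"
        using height_add_period[of "t - p"] by simp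
      then show ?thesis
        using less.IH[of "t - p"] assms period_pos False by simp
    qed (use a in simp)
  qed
  then show ?thesis
    by (rule that)
qed

lemma dpaths_with_length_gap:
  assumes TR: "totally_rectangular V E" and rise: "height p > 0"
  shows "\<exists>x y q. has_dpath V E q x y \<and> has_dpath V E (q + nat (height p)) x y"
proof -
  obtain a where a_min: "\<And>t. height a \<le> height t"
    using ex_global_min_height[OF rise] by blast
  obtain j where j: "a + p \<le> j" "j \<le> a + 2 * p"
    and j_max: "\<And>t. a + p \<le> t \<Longrightarrow> t \<le> a + 2 * p \<Longrightarrow> height t \<le> height j"
    using ex_max_on_interval[of "a + p" "a + 2 * p" height] by auto
  have below_j: "height t \<le> height j" if "a \<le> t" "t \<le> j" for t
  proof (cases "a + p \<le> t")
    case False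
    then have "height (t + p) \<le> height j"
      using j_max[of "t + p"] that by simp
    then show ?thesis
      using height_add_period[of t] rise by simp
  qed (use j_max that j in simp)
  have "climbs a j"
    by (rule climbsI) (use a_min below_j j in simp)
  then have long: "has_dpath V E (nat (height j - height a)) (w a) (w j)"
    by (rule dpath_of_climb[OF TR])
  have "climbs (a + p) j"
  proof (rule climbsI)
    fix t assume "min (a + p) j \<le> t" "t \<le> max (a + p) j"
    then have "a + p \<le> t" "t \<le> j"
      using j by simp_all
    moreover have "height (a + p) \<le> height (t - p + p)"
      using height_add_period[of a] height_add_period[of "t - p"] a_min[of "t - p"] by simp
    ultimately show "height (a + p) \<le> height t \<and> height t \<le> height j"
      using below_j by simp
  qed
  then have short: "has_dpath V E (nat (height j - height (a + p))) (w a) (w j)"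
    using dpath_of_climb[OF TR] walk_periodic[of a] by metis
  have "nat (height j - height (a + p)) + nat (height p) = nat (height j - height a)"
    using climbsD[OF \<open>climbs (a + p) j\<close>, of j] height_add_period[of a] rise j by simp
  then show ?thesis
    using long short by metis
qed

end

lemma net_length_eq_sum: "net_length ds = (\<Sum>i<length ds. if ds ! i then 1 else -1)"
proof -
  have "net_length ds = (\<Sum>b\<leftarrow>ds. if b then 1 else -1)"
    by (induction ds) (simp_all add: net_length_def)
  then show ?thesis
    by (simp add: sum_list_sum_nth atLeast0LessThan)
qed

lemma periodic_walk_of_cycle:
  assumes E: "E \<subseteq> V \<times> V" and cyc: "is_cycle V E vs ds"
  shows "periodic_walk V E (\<lambda>t. vs ! (t mod length vs)) (\<lambda>t. ds ! (t mod length vs)) (length vs)"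
proof
  let ?c = "length vs" and ?u = "vs @ [hd vs]"
  have "vs \<noteq> []" and path: "is_path V E ?u ds"
    using cyc by (auto simp: is_cycle_def)
  then have len: "length ds = ?c"
    by (simp add: is_path_def)
  show "E \<subseteq> V \<times> V" "?c > 0"
    using E \<open>vs \<noteq> []\<close> by simp_all
  fix t
  show "vs ! ((t + ?c) mod ?c) = vs ! (t mod ?c)" "ds ! ((t + ?c) mod ?c) = ds ! (t mod ?c)"
    by simp_all
  let ?i = "t mod ?c"
  have i: "?i < length ds"
    using len \<open>vs \<noteq> []\<close> by simp
  have here: "?u ! ?i = vs ! ?i"
    using i len by (simp add: nth_append)
  have succ: "?u ! Suc ?i = vs ! (Suc t mod ?c)"
  proof (cases "Suc ?i = ?c")
    case True
    then show ?thesis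
      using \<open>vs \<noteq> []\<close> by (simp add: mod_Suc hd_conv_nth nth_append)
  next
    case False
    then show ?thesis
      using i len by (simp add: mod_Suc nth_append)
  qed
  have "if ds ! ?i then (?u ! ?i, ?u ! Suc ?i) \<in> E else (?u ! Suc ?i, ?u ! ?i) \<in> E"
    using path i unfolding is_path_def by blast
  then show "(if ds ! ?i then (vs ! ?i, vs ! (Suc t mod ?c)) else (vs ! (Suc t mod ?c), vs ! ?i)) \<in> E"
    unfolding here succ by simp
qed

lemma height_of_cycle:
  assumes "E \<subseteq> V \<times> V" "is_cycle V E vs ds"
  shows "oriented_walk.height (\<lambda>t. ds ! (t mod length vs)) (length vs) = net_length ds"
proof -
  interpret periodic_walk V E "\<lambda>t. vs ! (t mod length vs)" "\<lambda>t. ds ! (t mod length vs)" "length vs"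
    using periodic_walk_of_cycle[OF assms] .
  have "length ds = length vs"
    using assms(2) by (simp add: is_cycle_def is_path_def)
  then show ?thesis
    unfolding height_def net_length_eq_sum by (intro sum.cong) simp_all
qed

theorem mainTheorem10:
  fixes V :: "'a set" and E :: "('a \<times> 'a) set" and d :: int
  assumes "finite V" and "E \<subseteq> V \<times> V"
    and "totally_rectangular V E"
    and "d > 0"
    and "\<exists>vs ds. is_cycle V E vs ds \<and> net_length ds = d"
  shows "\<exists>vs ds. is_cycle V E vs ds \<and> directed ds \<and> int (length vs) = d"
proof -
  obtain vs ds where cyc: "is_cycle V E vs ds" and "net_length ds = d"
    using assms(5) by blast
  interpret periodic_walk V E "\<lambda>t. vs ! (t mod length vs)" "\<lambda>t. ds ! (t mod length vs)" "length vs"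
    using periodic_walk_of_cycle[OF assms(2) cyc] .
  have "height (length vs) = d"
    using height_of_cycle[OF assms(2) cyc] \<open>net_length ds = d\<close> by simp
  then obtain x y q where "has_dpath V E q x y" "has_dpath V E (q + nat d) x y"
    using dpaths_with_length_gap[OF assms(3)] assms(4) by auto
  moreover have "nat d > 0"
    using assms(4) by simp
  ultimately obtain z where "has_dpath V E (nat d) z z"
    using closed_dpath_of_length_gap[OF assms(2,3)] by blast
  then obtain cs es where "is_cycle V E cs es" "directed es" "length cs = nat d"
    using directed_cycle_of_closed_dpath \<open>nat d > 0\<close> by meson
  then show ?thesis
    using assms(4) by (intro exI[of _ cs] exI[of _ es]) simp
qed

end
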